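(* Let $\psi$ be an additive character of $\mathbb{F}_{q^2}$ of conductor $q^2$. If $\rho$ is an irreducible representation of $\mathcal U=U_h^{2,q}(\mathbb{F}_{q^2})$ in which $H_{2(h-1)}$ acts by $\psi$ (i.e. $1+a\tau^{2(h-1)}$ acts by the scalar $\psi(a)$), then the restriction of $\rho$ to $H_0'$ contains the character $\widetilde\psi$.
   Context: Let $p$ be a prime, $q$ a power of $p$, $\ell\ne p$, and $h\ge2$ an integer; representations are over $\overline{\mathbb{Q}}_\ell$. For a commutative $\mathbb{F}_q$-algebra $A$, $U_h^{2,q}(A)$ is the set of formal expressions $1+\sum_{i=1}^{2(h-1)}a_i\tau^i$ ($a_i\in A$) with multiplication obtained by extending $(a\tau^i)(b\tau^j)=ab^{q^i}\tau^{i+j}$ bi-additively, $\tau^0=1$, $\tau^k=0$ for $k>2(h-1)$. In $\mathcal U=U_h^{2,q}(\mathbb{F}_{q^2})$ let $H_{2(h-1)}=\{1+a\tau^{2(h-1)}\}$ and $H_0'=\{1+\sum a_i\tau^i: a_i=0\text{ unless } i=2(h-1)\text{ or } i\text{ is odd with } i>h-1\}$. An additive character $\psi\colon\mathbb{F}_{q^2}\to\overline{\mathbb{Q}}_\ell^\times$ has conductor $q^2$ if there exists $x$ with $\psi(x^q)\ne\psi(x)$; $\widetilde\psi$ is the character $1+\sum a_i\tau^i\mapsto\psi(a_{2(h-1)})$ of $H_0'$. *)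

theory Defs
  imports Main "Jordan_Normal_Form.Matrix"
begin

text \<open>Elements of U_h^{2,q}(A) are encoded by their coefficient sequence
  a :: nat => 'a, standing for 1 + sum_{i=1}^{N} a_i tau^i with N = 2(h-1);
  coefficients outside {1..N} are required to be 0.\<close>

definition U_carrier :: "nat \<Rightarrow> (nat \<Rightarrow> 'a::zero) set" where
  "U_carrier h = {a. \<forall>k. (k < 1 \<or> k > 2 * (h - 1)) \<longrightarrow> a k = 0}"

definition U_one :: "nat \<Rightarrow> 'a::zero" where
  "U_one = (\<lambda>k. 0)"

text \<open>Product: (a tau^i)(b tau^j) = a b^(q^i) tau^(i+j), truncated above degree N.\<close>
definition U_mult :: "nat \<Rightarrow> nat \<Rightarrow> (nat \<Rightarrow> 'a::comm_ring_1) \<Rightarrow> (nat \<Rightarrow> 'a) \<Rightarrow> (nat \<Rightarrow> 'a)" where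
  "U_mult h q a b = (\<lambda>k. if 1 \<le> k \<and> k \<le> 2 * (h - 1)
      then a k + b k + (\<Sum>i\<in>{1..<k}. a i * b (k - i) ^ (q ^ i)) else 0)"

definition H_top_elt :: "nat \<Rightarrow> 'a::zero \<Rightarrow> (nat \<Rightarrow> 'a)" where
  "H_top_elt h c = (\<lambda>k. if k = 2 * (h - 1) then c else 0)"

definition H0' :: "nat \<Rightarrow> (nat \<Rightarrow> 'a::zero) set" where
  "H0' h = {a \<in> U_carrier h. \<forall>i. a i \<noteq> 0 \<longrightarrow> i = 2 * (h - 1) \<or> (odd i \<and> i > h - 1)}"

definition additive_character :: "('a::ab_group_add \<Rightarrow> complex) \<Rightarrow> bool" where
  "additive_character \<psi> \<longleftrightarrow> (\<forall>x. \<psi> x \<noteq> 0) \<and> (\<forall>x y. \<psi> (x + y) = \<psi> x * \<psi> y)"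

definition is_rep :: "'g set \<Rightarrow> ('g \<Rightarrow> 'g \<Rightarrow> 'g) \<Rightarrow> 'g \<Rightarrow> nat \<Rightarrow> ('g \<Rightarrow> complex mat) \<Rightarrow> bool" where
  "is_rep G gmul gone n \<rho> \<longleftrightarrow>
     (\<forall>g\<in>G. \<rho> g \<in> carrier_mat n n) \<and> \<rho> gone = 1\<^sub>m n \<and>
     (\<forall>g\<in>G. \<forall>g'\<in>G. \<rho> (gmul g g') = \<rho> g * \<rho> g')"

definition invariant_subspace :: "'g set \<Rightarrow> nat \<Rightarrow> ('g \<Rightarrow> complex mat) \<Rightarrow> complex vec set \<Rightarrow> bool" where
  "invariant_subspace G n \<rho> W \<longleftrightarrow>
     W \<subseteq> carrier_vec n \<and> 0\<^sub>v n \<in> W \<and>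
     (\<forall>v\<in>W. \<forall>w\<in>W. v + w \<in> W) \<and> (\<forall>c. \<forall>v\<in>W. c \<cdot>\<^sub>v v \<in> W) \<and>
     (\<forall>g\<in>G. \<forall>v\<in>W. \<rho> g *\<^sub>v v \<in> W)"

definition irreducible_rep :: "'g set \<Rightarrow> ('g \<Rightarrow> 'g \<Rightarrow> 'g) \<Rightarrow> 'g \<Rightarrow> nat \<Rightarrow> ('g \<Rightarrow> complex mat) \<Rightarrow> bool" where
  "irreducible_rep G gmul gone n \<rho> \<longleftrightarrow> is_rep G gmul gone n \<rho> \<and> n > 0 \<and>
     (\<forall>W. invariant_subspace G n \<rho> W \<longrightarrow> W = {0\<^sub>v n} \<or> W = carrier_vec n)"

definition restriction_contains :: "'g set \<Rightarrow> nat \<Rightarrow> ('g \<Rightarrow> complex mat) \<Rightarrow> ('g \<Rightarrow> complex) \<Rightarrow> bool" where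
  "restriction_contains H n \<rho> \<chi> \<longleftrightarrow>
     (\<exists>v\<in>carrier_vec n. v \<noteq> 0\<^sub>v n \<and> (\<forall>g\<in>H. \<rho> g *\<^sub>v v = \<chi> g \<cdot>\<^sub>v v))"

end

theory Submission
  imports Defs "HOL-Library.Cardinality" "HOL-Number_Theory.Residues"
begin

text \<open>Write \<open>N = 2(h-1)\<close> and \<open>H_s' = {a \<in> H_0' : a_i = 0 for i < s}\<close>. On \<open>H_N'\<close> the
  representation acts by \<open>\<psi>\<close>, and we descend from \<open>s + 1\<close> to \<open>s\<close>, carrying along a vector on
  which \<open>H_s'\<close> acts by \<open>\<psi>\<close>. Only odd \<open>s > h - 1\<close> need work. Then, with \<open>j = N - s\<close>,
  \<open>1 + x \<tau>^s\<close> and \<open>1 + y \<tau>^j\<close> commute up to the central element \<open>1 + (x y^{q^s} - y x^{q^j}) \<tau>^N\<close>.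
  Split the given vector \<open>w\<close> into its components \<open>u_y\<close> along the abelian group \<open>{1 + x \<tau>^s}\<close>,
  on which \<open>1 + x \<tau>^s\<close> acts by \<open>\<psi>(-x y^{q^s} + y x^{q^j})\<close>; the conductor of \<open>\<psi>\<close> makes these
  characters of \<open>x\<close> orthogonal, so \<open>\<Sum>_y u_y = q^2 w\<close> and some \<open>u_y \<noteq> 0\<close>. Applying \<open>1 + y \<tau>^j\<close>
  to \<open>u_y\<close> cancels the twist, giving a vector fixed by all \<open>1 + x \<tau>^s\<close>; it is still acted on by
  \<open>\<psi>\<close> under \<open>H_{s+1}'\<close>, which commutes with \<open>1 + y \<tau>^j\<close> and with \<open>{1 + x \<tau>^s}\<close>, hence
  under \<open>H_s' = {1 + x \<tau>^s} H_{s+1}'\<close>.\<close>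

lemma finite_field_power_card:
  fixes x :: "'a::{finite,field}"
  shows "x ^ CARD('a) = x"
proof (cases "x = 0")
  case False
  have "x * (\<Prod>y\<in>UNIV-{0}. x * y) = x * x ^ (CARD('a) - 1) * \<Prod>(UNIV-{0})"
    by (simp add: prod.distrib mult_ac)
  also have "x * x ^ (CARD('a) - 1) = x ^ CARD('a)"
    using finite_UNIV_card_ge_0[where ?'a = 'a] by (simp flip: power_Suc)
  also have "(\<Prod>y\<in>UNIV-{0}. x * y) = (\<Prod>y\<in>UNIV-{0}. y)"
    by (rule prod.reindex_bij_witness[of _ "\<lambda>y. y / x" "\<lambda>y. x * y"]) (use False in auto)
  finally show ?thesis
    by simp
qed (use finite_UNIV_card_ge_0[where ?'a = 'a] in auto)

lemma finite_field_power_card_power: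
  fixes x :: "'a::{finite,field}"
  shows "x ^ (CARD('a) ^ k) = x"
  by (induction k) (simp_all add: finite_field_power_card power_mult)

lemma CHAR_finite_field:
  assumes "prime p" and "CARD('a::{finite,field}) = p ^ k" and "k \<ge> 1"
  shows "CHAR('a) = p"
proof -
  have CHAR_prime: "prime CHAR('a)"
    by (rule prime_CHAR_semidom) (simp add: finite_imp_CHAR_pos)
  have "CHAR('a) dvd p ^ k"
    using CHAR_dvd_CARD[where 'a='a] assms(2) by simp
  then have "CHAR('a) dvd p"
    using CHAR_prime prime_dvd_power by blast
  then show ?thesis
    using CHAR_prime assms(1) primes_dvd_imp_eq by blast
qed

lemma power_add_iterate:
  fixes x y :: "'a::comm_semiring_1"
  assumes "\<And>x y :: 'a. (x + y) ^ q = x ^ q + y ^ q"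
  shows "(x + y) ^ (q ^ i) = x ^ (q ^ i) + y ^ (q ^ i)"
  by (induction i arbitrary: x y) (simp_all add: power_mult assms)

lemma additive_character_add:
  "additive_character \<psi> \<Longrightarrow> \<psi> (a + b) = \<psi> a * \<psi> b"
  by (simp add: additive_character_def)

lemma additive_character_zero:
  assumes "additive_character \<psi>"
  shows "\<psi> 0 = 1"
proof -
  have "\<psi> 0 = \<psi> 0 * \<psi> 0"
    using additive_character_add[OF assms, of 0 0] by simp
  moreover have "\<psi> 0 \<noteq> 0"
    using assms by (simp add: additive_character_def)
  ultimately show ?thesis
    by simp
qed

lemma sum_additive_character_eq_0:
  fixes f :: "'a::{finite,ab_group_add} \<Rightarrow> 'a"
  assumes "additive_character \<psi>" and "\<And>a b. f (a + b) = f a + f b" and "\<psi> (f y0) \<noteq> 1"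
  shows "(\<Sum>y\<in>UNIV. \<psi> (f y)) = 0"
proof -
  let ?S = "\<Sum>y\<in>UNIV. \<psi> (f y)"
  have "?S = (\<Sum>y\<in>UNIV. \<psi> (f (y + y0)))"
    by (rule sum.reindex_bij_witness[of _ "\<lambda>x. x + y0" "\<lambda>x. x - y0"]) auto
  also have "\<dots> = ?S * \<psi> (f y0)"
    using assms(1,2) by (simp add: additive_character_add sum_distrib_right)
  finally have "?S * (1 - \<psi> (f y0)) = 0"
    by (simp add: algebra_simps)
  then show ?thesis
    using assms(3) by simp
qed

text \<open>The top coefficient of the commutator of \<open>x \<tau>^s\<close> and \<open>y \<tau>^j\<close> when \<open>s + j = 2(h-1)\<close>.\<close>
definition commutator_pairing :: "nat \<Rightarrow> nat \<Rightarrow> nat \<Rightarrow> 'a::comm_ring_1 \<Rightarrow> 'a \<Rightarrow> 'a" where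
  "commutator_pairing q s j x y = x * y ^ (q ^ s) - y * x ^ (q ^ j)"

lemma commutator_pairing_add_left:
  fixes x1 x2 y :: "'a::comm_ring_1"
  assumes "\<And>x y :: 'a. (x + y) ^ q = x ^ q + y ^ q"
  shows "commutator_pairing q s j (x1 + x2) y = commutator_pairing q s j x1 y + commutator_pairing q s j x2 y"
  using power_add_iterate[OF assms, of x1 x2 j] by (simp add: commutator_pairing_def algebra_simps)

lemma commutator_pairing_add_right:
  fixes x y1 y2 :: "'a::comm_ring_1"
  assumes "\<And>x y :: 'a. (x + y) ^ q = x ^ q + y ^ q"
  shows "commutator_pairing q s j x (y1 + y2) = commutator_pairing q s j x y1 + commutator_pairing q s j x y2"
  using power_add_iterate[OF assms, of y1 y2 s] by (simp add: commutator_pairing_def algebra_simps)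

text \<open>Orthogonality: for \<open>x \<noteq> 0\<close> the character \<open>y \<mapsto> \<psi>(x y^{q^s} - y x^{q^j})\<close> is nontrivial,
  because at \<open>y = z / x^{q^j}\<close> it takes the value \<open>\<psi>(z^q - z)\<close>; here \<open>q^s\<close> acts as \<open>q\<close>
  and \<open>q^{s+j}\<close> as the identity on \<open>'a\<close> since \<open>s\<close> is odd and \<open>s + j\<close> even.\<close>
lemma sum_additive_character_commutator_pairing:
  fixes \<psi> :: "'a::{finite,field} \<Rightarrow> complex"
  assumes \<psi>: "additive_character \<psi>" and conductor: "\<psi> (z ^ q) \<noteq> \<psi> z"
    and card: "CARD('a) = q ^ 2" and frobenius: "\<And>x y :: 'a. (x + y) ^ q = x ^ q + y ^ q"
    and "odd s" and "s + j = 2 * m"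
  shows "(\<Sum>y\<in>UNIV. \<psi> (commutator_pairing q s j x y)) = (if x = 0 then of_nat CARD('a) else 0)"
proof (cases "x = 0")
  case True
  have "q > 0"
    using card finite_UNIV_card_ge_0[where ?'a = 'a] by (cases q) auto
  with True show ?thesis
    by (simp add: commutator_pairing_def power_0_left additive_character_zero[OF \<psi>])
next
  case False
  let ?d = "commutator_pairing q s j x"
  define y0 where "y0 = z / x ^ (q ^ j)"
  have "q ^ j * q ^ s = CARD('a) ^ m"
    using card assms(6) by (simp add: ac_simps flip: power_add power_mult)
  then have x_power: "x ^ (q ^ j * q ^ s) = x"
    by (simp add: finite_field_power_card_power)
  obtain k where k: "s = Suc (2 * k)"
    using \<open>odd s\<close> oddE by (metis Suc_eq_plus1)
  have "z ^ (q ^ s) = (z ^ q) ^ (CARD('a) ^ k)"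
    using k card by (simp add: power_mult_distrib flip: power_mult)
  then have "z ^ (q ^ s) = z ^ q"
    by (simp add: finite_field_power_card_power)
  then have "y0 ^ (q ^ s) = z ^ q / x"
    using x_power by (simp add: y0_def power_divide flip: power_mult)
  then have "?d y0 = z ^ q - z"
    using False by (simp add: commutator_pairing_def y0_def)
  moreover have "\<psi> (z ^ q - z) \<noteq> 1"
    using conductor additive_character_add[OF \<psi>, of "z ^ q - z" z] by auto
  ultimately have "\<psi> (?d y0) \<noteq> 1"
    by simp
  then have "(\<Sum>y\<in>UNIV. \<psi> (?d y)) = 0"
    by (rule sum_additive_character_eq_0[OF \<psi> commutator_pairing_add_right[OF frobenius]])
  then show ?thesis
    using False by simp
qed

definition U_monom :: "nat \<Rightarrow> 'a::zero \<Rightarrow> nat \<Rightarrow> 'a" where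
  "U_monom k c = (\<lambda>i. if i = k then c else 0)"

lemma U_monom_in_U_carrier: "1 \<le> k \<Longrightarrow> k \<le> 2 * (h - 1) \<Longrightarrow> U_monom k c \<in> U_carrier h"
  by (auto simp: U_monom_def U_carrier_def)

lemma U_mult_in_U_carrier: "U_mult h q a b \<in> U_carrier h"
  by (auto simp: U_mult_def U_carrier_def)

lemma H_top_elt_eq_U_monom: "H_top_elt h c = U_monom (2 * (h - 1)) c"
  by (simp add: H_top_elt_def U_monom_def)

lemma U_monom_zero: "U_monom k 0 = U_one"
  by (simp add: U_monom_def U_one_def fun_eq_iff)

lemma zero_power_power [simp]: "q > 0 \<Longrightarrow> (0::'a::semiring_1) ^ (q ^ i) = 0"
  by (simp add: power_0_left)

text \<open>On elements supported in degrees \<open>> h - 1\<close> all products \<open>a_i b_{k-i}^{q^i}\<close> land beyond the top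
  degree, so the group law is addition of coefficients.\<close>
lemma U_mult_eq_add_upper:
  fixes a b :: "nat \<Rightarrow> 'a::comm_ring_1"
  assumes "q > 0" and "a \<in> U_carrier h" and "b \<in> U_carrier h"
    and "\<forall>i\<le>h-1. a i = 0" and "\<forall>i\<le>h-1. b i = 0"
  shows "U_mult h q a b = (\<lambda>k. a k + b k)"
proof
  fix k
  show "U_mult h q a b k = a k + b k"
  proof (cases "1 \<le> k \<and> k \<le> 2 * (h - 1)")
    case True
    have "a i * b (k - i) ^ (q ^ i) = 0" if "i \<in> {1..<k}" for i
      using True assms(1,4,5) by (cases "i \<le> h - 1") auto
    then show ?thesis
      using True by (simp add: U_mult_def)
  next
    case False
    then show ?thesis
      using assms(2,3) by (cases "k = 0") (auto simp: U_mult_def U_carrier_def)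
  qed
qed

lemma U_mult_monom_commute:
  fixes a :: "nat \<Rightarrow> 'a::comm_ring_1"
  assumes "q > 0" and "a \<in> U_carrier h" and "\<forall>i\<le>s. a i = 0" and "j + s = 2 * (h - 1)"
  shows "U_mult h q (U_monom j y) a = U_mult h q a (U_monom j y)"
proof
  fix k
  show "U_mult h q (U_monom j y) a k = U_mult h q a (U_monom j y) k"
  proof (cases "1 \<le> k \<and> k \<le> 2 * (h - 1)")
    case True
    have "U_monom j y i * a (k - i) ^ (q ^ i) = 0" if "i \<in> {1..<k}" for i
      using True assms by (cases "i = j") (auto simp: U_monom_def)
    moreover have "a i * U_monom j y (k - i) ^ (q ^ i) = 0" if "i \<in> {1..<k}" for i
      using True that assms by (cases "k - i = j") (auto simp: U_monom_def)
    ultimately show ?thesis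
      using True by (simp add: U_mult_def add.commute)
  qed (auto simp: U_mult_def)
qed

lemma U_mult_monom_monom:
  fixes x y :: "'a::comm_ring_1"
  assumes "q > 0" and "1 \<le> s"
  shows "U_mult h q (U_monom s x) (U_monom j y) = (\<lambda>k. if 1 \<le> k \<and> k \<le> 2 * (h - 1) then
     U_monom s x k + U_monom j y k + (if s < k \<and> k - s = j then x * y ^ (q ^ s) else 0) else 0)"
proof
  fix k
  have "(\<Sum>i\<in>{1..<k}. U_monom s x i * U_monom j y (k - i) ^ (q ^ i)) =
        (\<Sum>i\<in>{1..<k}. if i = s then x * U_monom j y (k - s) ^ (q ^ s) else 0)"
    by (rule sum.cong) (auto simp: U_monom_def)
  also have "\<dots> = (if s < k \<and> k - s = j then x * y ^ (q ^ s) else 0)"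
    using assms by (auto simp: U_monom_def)
  finally show "U_mult h q (U_monom s x) (U_monom j y) k = (if 1 \<le> k \<and> k \<le> 2 * (h - 1) then
     U_monom s x k + U_monom j y k + (if s < k \<and> k - s = j then x * y ^ (q ^ s) else 0) else 0)"
    by (simp add: U_mult_def)
qed

lemma U_mult_top_monom:
  fixes c :: "'a::comm_ring_1"
  assumes "q > 0" and "a \<in> U_carrier h" and "h \<ge> 2"
  shows "U_mult h q a (U_monom (2 * (h - 1)) c) = (\<lambda>k. a k + U_monom (2 * (h - 1)) c k)"
proof
  fix k
  have "(\<Sum>i\<in>{1..<k}. a i * U_monom (2 * (h - 1)) c (k - i) ^ (q ^ i)) = 0" if "k \<le> 2 * (h - 1)"
    by (rule sum.neutral) (use that assms(1) in \<open>auto simp: U_monom_def\<close>)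
  then show "U_mult h q a (U_monom (2 * (h - 1)) c) k = a k + U_monom (2 * (h - 1)) c k"
    using assms(2,3) by (auto simp: U_mult_def U_carrier_def U_monom_def not_less_eq_eq)
qed

lemma U_monom_commutator:
  fixes x y :: "'a::comm_ring_1"
  assumes "q > 0" and "1 \<le> j" and "j < s" and "s + j = 2 * (h - 1)" and "h \<ge> 2"
  shows "U_mult h q (U_monom s x) (U_monom j y) =
    U_mult h q (U_mult h q (U_monom j y) (U_monom s x))
      (U_monom (2 * (h - 1)) (commutator_pairing q s j x y))"
proof -
  have "s \<ge> 1"
    using assms(2,3) by simp
  show ?thesis
    unfolding U_mult_top_monom[OF assms(1) U_mult_in_U_carrier assms(5)]
    unfolding U_mult_monom_monom[OF assms(1) \<open>s \<ge> 1\<close>] U_mult_monom_monom[OF assms(1) assms(2)]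
    using assms by (auto simp: fun_eq_iff U_monom_def commutator_pairing_def) arith
qed

lemma U_mult_right_cancel:
  fixes a a' g :: "nat \<Rightarrow> 'a::comm_ring_1"
  assumes "a \<in> U_carrier h" and "a' \<in> U_carrier h" and "U_mult h q a g = U_mult h q a' g"
  shows "a = a'"
proof
  fix k
  show "a k = a' k"
  proof (induction k rule: less_induct)
    case (less k)
    show ?case
    proof (cases "1 \<le> k \<and> k \<le> 2 * (h - 1)")
      case True
      have "(\<Sum>i\<in>{1..<k}. a i * g (k - i) ^ (q ^ i)) = (\<Sum>i\<in>{1..<k}. a' i * g (k - i) ^ (q ^ i))"
        by (rule sum.cong) (auto simp: less)
      moreover have "U_mult h q a g k = U_mult h q a' g k"
        using assms(3) by simp
      ultimately show ?thesis
        using True by (simp add: U_mult_def)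
    next
      case False
      then show ?thesis
        using assms(1,2) by (cases "k = 0") (auto simp: U_carrier_def)
    qed
  qed
qed

lemma finite_U_carrier: "finite (U_carrier h :: (nat \<Rightarrow> 'a::{finite,zero}) set)"
proof -
  have "U_carrier h = {f :: nat \<Rightarrow> 'a. \<forall>x. (x \<in> {1..2*(h-1)} \<longrightarrow> f x \<in> UNIV) \<and>
                                        (x \<notin> {1..2*(h-1)} \<longrightarrow> f x = 0)}"
    by (auto simp: U_carrier_def not_less_eq_eq)
  then show ?thesis
    using finite_set_of_finite_funs[of "{1..2*(h-1)}" "UNIV :: 'a set" 0] by simp
qed

text \<open>Right multiplication by \<open>g\<close> is injective on the finite set \<open>U\<close>, hence onto, so it hits \<open>1\<close>.\<close>
lemma U_left_inverse:
  fixes g :: "nat \<Rightarrow> 'a::{finite,comm_ring_1}"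
  obtains b where "b \<in> U_carrier h" and "U_mult h q b g = U_one"
proof -
  have "(\<lambda>a. U_mult h q a g) ` U_carrier h = U_carrier h"
    by (rule endo_inj_surj[OF finite_U_carrier])
      (auto simp: U_mult_in_U_carrier inj_on_def intro: U_mult_right_cancel)
  moreover have "U_one \<in> U_carrier h"
    by (simp add: U_one_def U_carrier_def)
  ultimately show ?thesis
    using that by (metis imageE)
qed

definition H0'_level :: "nat \<Rightarrow> nat \<Rightarrow> (nat \<Rightarrow> 'a::zero) set" where
  "H0'_level h s = {a \<in> H0' h. \<forall>i<s. a i = 0}"

lemma H0'_level_0: "H0'_level h 0 = H0' h"
  by (simp add: H0'_level_def)

lemma H0'_level_Suc:
  assumes "s < 2 * (h - 1)" and "\<not> (odd s \<and> h - 1 < s)"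
  shows "H0'_level h (Suc s) = H0'_level h s"
  using assms by (auto simp: H0'_level_def H0'_def less_Suc_eq)

lemma H0'_level_top:
  assumes "a \<in> H0'_level h (2 * (h - 1))"
  shows "a = U_monom (2 * (h - 1)) (a (2 * (h - 1)))"
proof
  fix k
  show "a k = U_monom (2 * (h - 1)) (a (2 * (h - 1))) k"
    using assms by (cases "k < 2 * (h - 1)") (auto simp: H0'_level_def H0'_def U_carrier_def U_monom_def)
qed

lemma H0'_in_U_carrier: "a \<in> H0' h \<Longrightarrow> a \<in> U_carrier h"
  by (simp add: H0'_def)

lemma H0'_lower_half: "a \<in> H0' h \<Longrightarrow> h \<ge> 2 \<Longrightarrow> i \<le> h - 1 \<Longrightarrow> a i = 0"
  by (auto simp: H0'_def)

definition vec_sum :: "nat \<Rightarrow> ('a::finite \<Rightarrow> complex vec) \<Rightarrow> complex vec" where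
  "vec_sum n f = vec n (\<lambda>r. \<Sum>x\<in>UNIV. f x $ r)"

lemma vec_sum_carrier [simp]: "vec_sum n f \<in> carrier_vec n"
  by (simp add: vec_sum_def)

lemma index_vec_sum: "r < n \<Longrightarrow> vec_sum n f $ r = (\<Sum>x\<in>UNIV. f x $ r)"
  by (simp add: vec_sum_def)

lemma mult_mat_vec_vec_sum:
  assumes "M \<in> carrier_mat n n" and "\<And>x. f x \<in> carrier_vec n"
  shows "M *\<^sub>v vec_sum n f = vec_sum n (\<lambda>x. M *\<^sub>v f x)"
proof (rule eq_vecI)
  fix i
  assume "i < dim_vec (vec_sum n (\<lambda>x. M *\<^sub>v f x))"
  then have i: "i < n"
    by (simp add: vec_sum_def)
  have dim_f: "dim_vec (f x) = n" for x
    using assms(2) carrier_vecD by blast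
  have "(M *\<^sub>v vec_sum n f) $ i = (\<Sum>k\<in>{0..<n}. M $$ (i, k) * (\<Sum>x\<in>UNIV. f x $ k))"
    using assms i by (simp add: scalar_prod_def index_vec_sum vec_sum_def)
  also have "\<dots> = (\<Sum>x\<in>UNIV. \<Sum>k\<in>{0..<n}. M $$ (i, k) * f x $ k)"
    unfolding sum_distrib_left by (rule sum.swap)
  also have "\<dots> = vec_sum n (\<lambda>x. M *\<^sub>v f x) $ i"
    using assms i by (simp add: scalar_prod_def index_vec_sum dim_f)
  finally show "(M *\<^sub>v vec_sum n f) $ i = vec_sum n (\<lambda>x. M *\<^sub>v f x) $ i" .
qed (use assms(1) in \<open>simp add: vec_sum_def\<close>)

lemma smult_vec_sum:
  assumes "\<And>x. f x \<in> carrier_vec n"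
  shows "c \<cdot>\<^sub>v vec_sum n f = vec_sum n (\<lambda>x. c \<cdot>\<^sub>v f x)"
proof -
  have "dim_vec (f x) = n" for x
    using assms carrier_vecD by blast
  then show ?thesis
    by (intro eq_vecI) (auto simp: vec_sum_def sum_distrib_left)
qed

lemma vec_sum_translate: "vec_sum n (f :: 'a::{finite,ab_group_add} \<Rightarrow> complex vec) = vec_sum n (\<lambda>x. f (x + a))"
proof -
  have "(\<Sum>x\<in>UNIV. f x $ r) = (\<Sum>x\<in>UNIV. f (x + a) $ r)" for r
    by (rule sum.reindex_bij_witness[of _ "\<lambda>x. x + a" "\<lambda>x. x - a"]) auto
  then show ?thesis
    by (simp add: vec_sum_def)
qed

lemma smult_one_mat_mult_vec:
  fixes u :: "'a::comm_ring_1 vec"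
  assumes "u \<in> carrier_vec n"
  shows "(c \<cdot>\<^sub>m 1\<^sub>m n) *\<^sub>v u = c \<cdot>\<^sub>v u"
proof -
  have "(c \<cdot>\<^sub>m 1\<^sub>m n) *\<^sub>v u = c \<cdot>\<^sub>v (1\<^sub>m n *\<^sub>v u)"
    using assms by (intro eq_vecI) auto
  then show ?thesis
    using assms by simp
qed

locale U_rep_central_character =
  fixes p q e h n :: nat and \<psi> :: "'a::{finite,field} \<Rightarrow> complex"
    and \<rho> :: "(nat \<Rightarrow> 'a) \<Rightarrow> complex mat"
  assumes prime_p: "prime p" and e_ge_1: "e \<ge> 1" and q_def: "q = p ^ e" and h_ge_2: "h \<ge> 2"
    and card_eq: "CARD('a) = q ^ 2"
    and additive_psi: "additive_character \<psi>"
    and conductor: "\<exists>x. \<psi> (x ^ q) \<noteq> \<psi> x"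
    and rep: "is_rep (U_carrier h) (U_mult h q) U_one n \<rho>"
    and n_pos: "n > 0"
    and central_character: "\<forall>c. \<rho> (H_top_elt h c) = \<psi> c \<cdot>\<^sub>m 1\<^sub>m n"
begin

lemma q_pos: "q > 0"
  using prime_p q_def prime_gt_0_nat by simp

lemma frobenius_add: "(x + y :: 'a) ^ q = x ^ q + y ^ q"
proof -
  have "CARD('a) = p ^ (2 * e)"
    using card_eq q_def by (simp add: power_mult mult.commute)
  then have "CHAR('a) = p"
    by (rule CHAR_finite_field[OF prime_p]) (use e_ge_1 in simp)
  then show ?thesis
    using prime_p q_def by (intro freshmans_dream') simp_all
qed

lemma rho_carrier: "g \<in> U_carrier h \<Longrightarrow> \<rho> g \<in> carrier_mat n n"
  using rep by (simp add: is_rep_def)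

lemma rho_one: "\<rho> U_one = 1\<^sub>m n"
  using rep by (simp add: is_rep_def)

lemma rho_mult_vec:
  assumes "g \<in> U_carrier h" and "g' \<in> U_carrier h" and "u \<in> carrier_vec n"
  shows "\<rho> (U_mult h q g g') *\<^sub>v u = \<rho> g *\<^sub>v (\<rho> g' *\<^sub>v u)"
proof -
  have "\<rho> (U_mult h q g g') = \<rho> g * \<rho> g'"
    using rep assms(1,2) by (simp add: is_rep_def)
  then show ?thesis
    using assoc_mult_mat_vec[OF rho_carrier[OF assms(1)] rho_carrier[OF assms(2)] assms(3)] by simp
qed

lemma rho_top_mult_vec: "u \<in> carrier_vec n \<Longrightarrow> \<rho> (U_monom (2 * (h - 1)) c) *\<^sub>v u = \<psi> c \<cdot>\<^sub>v u"
  using central_character H_top_elt_eq_U_monom smult_one_mat_mult_vec by metis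

lemma rho_mult_vec_eq_zero:
  assumes "g \<in> U_carrier h" and "u \<in> carrier_vec n" and "\<rho> g *\<^sub>v u = 0\<^sub>v n"
  shows "u = 0\<^sub>v n"
proof -
  obtain b where b: "b \<in> U_carrier h" "U_mult h q b g = U_one"
    by (rule U_left_inverse)
  have "u = \<rho> (U_mult h q b g) *\<^sub>v u"
    using assms(2) b(2) rho_one by simp
  also have "\<dots> = \<rho> b *\<^sub>v (\<rho> g *\<^sub>v u)"
    using rho_mult_vec b(1) assms(1,2) by blast
  also have "\<dots> = 0\<^sub>v n"
    using assms(3) rho_carrier[OF b(1)] by auto
  finally show ?thesis .
qed

definition psi_eigenvector :: "(nat \<Rightarrow> 'a) set \<Rightarrow> complex vec \<Rightarrow> bool" where
  "psi_eigenvector S v \<longleftrightarrow> v \<in> carrier_vec n \<and> v \<noteq> 0\<^sub>v n \<and>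
     (\<forall>a\<in>S. \<rho> a *\<^sub>v v = \<psi> (a (2 * (h - 1))) \<cdot>\<^sub>v v)"

lemma psi_eigenvector_top_level: "\<exists>v. psi_eigenvector (H0'_level h (2 * (h - 1))) v"
proof -
  have "\<rho> a *\<^sub>v unit_vec n 0 = \<psi> (a (2 * (h - 1))) \<cdot>\<^sub>v unit_vec n 0"
    if "a \<in> H0'_level h (2 * (h - 1))" for a
  proof -
    have "\<rho> a = \<rho> (U_monom (2 * (h - 1)) (a (2 * (h - 1))))"
      using H0'_level_top[OF that] by (rule arg_cong)
    then show ?thesis
      by (simp only: rho_top_mult_vec[OF unit_vec_carrier])
  qed
  moreover have "unit_vec n 0 \<noteq> 0\<^sub>v n"
    using n_pos unit_vec_nonzero by blast
  ultimately have "psi_eigenvector (H0'_level h (2 * (h - 1))) (unit_vec n 0)"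
    unfolding psi_eigenvector_def by simp
  then show ?thesis ..
qed

context
  fixes s j :: nat
  assumes s_odd: "odd s" and s_gt: "h - 1 < s" and s_plus_j: "s + j = 2 * (h - 1)"
begin

lemma j_bounds: "1 \<le> j" "j < s"
proof -
  show "1 \<le> j"
    using s_odd s_plus_j by (cases j) auto
  show "j < s"
    using s_gt s_plus_j h_ge_2 by linarith
qed

lemma U_monom_s_in_U_carrier: "U_monom s x \<in> U_carrier h"
  using j_bounds s_plus_j by (intro U_monom_in_U_carrier) auto

lemma U_monom_j_in_U_carrier: "U_monom j y \<in> U_carrier h"
  using j_bounds s_plus_j by (intro U_monom_in_U_carrier) auto

lemma U_monom_s_lower_half: "\<forall>i\<le>h-1. U_monom s x i = 0"
  using s_gt by (auto simp: U_monom_def)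

lemma rho_monom_commutator:
  assumes "u \<in> carrier_vec n"
  shows "\<rho> (U_monom s x) *\<^sub>v (\<rho> (U_monom j y) *\<^sub>v u) =
    \<psi> (commutator_pairing q s j x y) \<cdot>\<^sub>v (\<rho> (U_monom j y) *\<^sub>v (\<rho> (U_monom s x) *\<^sub>v u))"
proof -
  let ?c = "commutator_pairing q s j x y" and ?yx = "U_mult h q (U_monom j y) (U_monom s x)"
  have "\<rho> (U_monom s x) *\<^sub>v (\<rho> (U_monom j y) *\<^sub>v u) = \<rho> (U_mult h q (U_monom s x) (U_monom j y)) *\<^sub>v u"
    using rho_mult_vec[OF U_monom_s_in_U_carrier U_monom_j_in_U_carrier assms] by simp
  also have "\<dots> = \<rho> (U_mult h q ?yx (U_monom (2 * (h - 1)) ?c)) *\<^sub>v u"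
    by (subst U_monom_commutator[OF q_pos j_bounds s_plus_j h_ge_2]) (rule refl)
  also have "\<dots> = \<rho> ?yx *\<^sub>v (\<psi> ?c \<cdot>\<^sub>v u)"
  proof -
    have "U_monom (2 * (h - 1)) ?c \<in> U_carrier h"
      using h_ge_2 by (intro U_monom_in_U_carrier) auto
    then show ?thesis
      using rho_mult_vec[OF U_mult_in_U_carrier _ assms] rho_top_mult_vec[OF assms] by simp
  qed
  also have "\<dots> = \<psi> ?c \<cdot>\<^sub>v (\<rho> (U_monom j y) *\<^sub>v (\<rho> (U_monom s x) *\<^sub>v u))"
    using mult_mat_vec[OF rho_carrier[OF U_mult_in_U_carrier] assms]
      rho_mult_vec[OF U_monom_j_in_U_carrier U_monom_s_in_U_carrier assms] by simp
  finally show ?thesis .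
qed

lemma rho_monom_s_add:
  assumes "u \<in> carrier_vec n"
  shows "\<rho> (U_monom s x') *\<^sub>v (\<rho> (U_monom s x) *\<^sub>v u) = \<rho> (U_monom s (x' + x)) *\<^sub>v u"
proof -
  have "U_mult h q (U_monom s x') (U_monom s x) = (\<lambda>k. U_monom s x' k + U_monom s x k)"
    by (rule U_mult_eq_add_upper[OF q_pos U_monom_s_in_U_carrier U_monom_s_in_U_carrier
        U_monom_s_lower_half U_monom_s_lower_half])
  also have "\<dots> = U_monom s (x' + x)"
    by (auto simp: U_monom_def)
  finally have "U_mult h q (U_monom s x') (U_monom s x) = U_monom s (x' + x)" .
  then show ?thesis
    using rho_mult_vec[OF U_monom_s_in_U_carrier U_monom_s_in_U_carrier assms, of x' x] by simp
qed

lemma sum_psi_commutator_pairing: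
  "(\<Sum>y\<in>UNIV. \<psi> (commutator_pairing q s j x y)) = (if x = 0 then of_nat CARD('a) else 0)"
proof -
  obtain z where "\<psi> (z ^ q) \<noteq> \<psi> z"
    using conductor by blast
  then show ?thesis
    using sum_additive_character_commutator_pairing[OF additive_psi _ card_eq frobenius_add s_odd s_plus_j]
    by blast
qed

text \<open>The \<open>y\<close>-th Fourier component of \<open>w\<close> for the abelian group \<open>{1 + x \<tau>^s}\<close>; by
  orthogonality these components sum to \<open>q^2 w\<close>.\<close>
definition twisted_average :: "complex vec \<Rightarrow> 'a \<Rightarrow> complex vec" where
  "twisted_average w y = vec_sum n (\<lambda>x. \<psi> (commutator_pairing q s j x y) \<cdot>\<^sub>v (\<rho> (U_monom s x) *\<^sub>v w))"

lemma twisted_average_carrier: "twisted_average w y \<in> carrier_vec n"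
  by (simp add: twisted_average_def)

lemma twisted_average_nonzero:
  assumes "w \<in> carrier_vec n" and "w \<noteq> 0\<^sub>v n"
  obtains y where "twisted_average w y \<noteq> 0\<^sub>v n"
proof (rule ccontr)
  assume "\<not> thesis"
  then have all_zero: "twisted_average w y = 0\<^sub>v n" for y
    using that by blast
  have "w = 0\<^sub>v n"
  proof (rule eq_vecI)
    fix r
    assume "r < dim_vec (0\<^sub>v n)"
    then have r: "r < n"
      by simp
    define F where "F x = (\<rho> (U_monom s x) *\<^sub>v w) $ r" for x
    have "0 = (\<Sum>y\<in>UNIV. twisted_average w y $ r)"
      using all_zero r by simp
    also have "\<dots> = (\<Sum>y\<in>UNIV. \<Sum>x\<in>UNIV. \<psi> (commutator_pairing q s j x y) * F x)"
      using r carrier_matD(1)[OF rho_carrier[OF U_monom_s_in_U_carrier]]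
      by (simp add: twisted_average_def index_vec_sum F_def)
    also have "\<dots> = (\<Sum>x\<in>UNIV. (\<Sum>y\<in>UNIV. \<psi> (commutator_pairing q s j x y)) * F x)"
      by (subst sum.swap) (simp add: sum_distrib_right)
    also have "\<dots> = (\<Sum>x\<in>UNIV. if x = (0::'a) then of_nat CARD('a) * F 0 else 0)"
      by (rule sum.cong) (simp_all add: sum_psi_commutator_pairing)
    also have "\<dots> = of_nat CARD('a) * F 0"
      by simp
    also have "F 0 = w $ r"
      using assms(1) by (simp add: F_def U_monom_zero rho_one)
    finally show "w $ r = 0\<^sub>v n $ r"
      using r by simp
  qed (use assms(1) in simp)
  with assms(2) show False
    by contradiction
qed

lemma rho_monom_s_twisted_average:
  assumes "w \<in> carrier_vec n"
  shows "\<rho> (U_monom s x') *\<^sub>v twisted_average w y =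
    \<psi> (commutator_pairing q s j (-x') y) \<cdot>\<^sub>v twisted_average w y"
proof -
  let ?d = "\<lambda>x. commutator_pairing q s j x y" and ?\<sigma> = "\<lambda>x. \<rho> (U_monom s x)"
  have \<sigma>_carrier: "?\<sigma> x \<in> carrier_mat n n" for x
    by (rule rho_carrier[OF U_monom_s_in_U_carrier])
  have summand_carrier: "\<psi> (?d x) \<cdot>\<^sub>v (?\<sigma> x *\<^sub>v w) \<in> carrier_vec n" for x
    using mult_mat_vec_carrier[OF \<sigma>_carrier assms] by simp
  have "?\<sigma> x' *\<^sub>v twisted_average w y = vec_sum n (\<lambda>x. ?\<sigma> x' *\<^sub>v (\<psi> (?d x) \<cdot>\<^sub>v (?\<sigma> x *\<^sub>v w)))"
    unfolding twisted_average_def by (rule mult_mat_vec_vec_sum[OF \<sigma>_carrier summand_carrier])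
  also have "\<dots> = vec_sum n (\<lambda>x. \<psi> (?d x) \<cdot>\<^sub>v (?\<sigma> (x' + x) *\<^sub>v w))"
    using mult_mat_vec[OF \<sigma>_carrier mult_mat_vec_carrier[OF \<sigma>_carrier assms]] rho_monom_s_add[OF assms]
    by simp
  also have "\<dots> = vec_sum n (\<lambda>x. \<psi> (?d (x - x')) \<cdot>\<^sub>v (?\<sigma> x *\<^sub>v w))"
    using vec_sum_translate[of n "\<lambda>z. \<psi> (?d (z - x')) \<cdot>\<^sub>v (?\<sigma> z *\<^sub>v w)" x'] by (simp add: add.commute)
  also have "\<dots> = vec_sum n (\<lambda>x. \<psi> (?d (-x')) \<cdot>\<^sub>v (\<psi> (?d x) \<cdot>\<^sub>v (?\<sigma> x *\<^sub>v w)))"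
    using commutator_pairing_add_left[OF frobenius_add, of s j _ "-x'" y]
    by (simp add: additive_character_add[OF additive_psi] smult_smult_assoc mult.commute)
  also have "\<dots> = \<psi> (?d (-x')) \<cdot>\<^sub>v twisted_average w y"
    unfolding twisted_average_def by (rule smult_vec_sum[symmetric]) (rule summand_carrier)
  finally show ?thesis .
qed

lemma rho_monom_s_fixes_translated_twisted_average:
  assumes "w \<in> carrier_vec n"
  shows "\<rho> (U_monom s x) *\<^sub>v (\<rho> (U_monom j y) *\<^sub>v twisted_average w y) =
    \<rho> (U_monom j y) *\<^sub>v twisted_average w y"
proof -
  let ?d = "\<lambda>x. commutator_pairing q s j x y" and ?u = "twisted_average w y"
    and ?\<tau> = "\<rho> (U_monom j y)"
  have "?d x + ?d (-x) = 0"
    using commutator_pairing_add_left[OF frobenius_add, of s j x "-x" y] q_pos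
    by (simp add: commutator_pairing_def)
  then have twists_cancel: "\<psi> (?d x) * \<psi> (?d (-x)) = 1"
    by (simp flip: additive_character_add[OF additive_psi] add: additive_character_zero[OF additive_psi])
  have "\<rho> (U_monom s x) *\<^sub>v (?\<tau> *\<^sub>v ?u) = \<psi> (?d x) \<cdot>\<^sub>v (?\<tau> *\<^sub>v (\<rho> (U_monom s x) *\<^sub>v ?u))"
    by (rule rho_monom_commutator[OF twisted_average_carrier])
  also have "\<rho> (U_monom s x) *\<^sub>v ?u = \<psi> (?d (-x)) \<cdot>\<^sub>v ?u"
    by (rule rho_monom_s_twisted_average[OF assms])
  also have "?\<tau> *\<^sub>v (\<psi> (?d (-x)) \<cdot>\<^sub>v ?u) = \<psi> (?d (-x)) \<cdot>\<^sub>v (?\<tau> *\<^sub>v ?u)"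
    by (rule mult_mat_vec[OF rho_carrier[OF U_monom_j_in_U_carrier] twisted_average_carrier])
  finally show ?thesis
    by (simp add: smult_smult_assoc twists_cancel)
qed

lemma rho_H0'_level_twisted_average:
  assumes w: "psi_eigenvector (H0'_level h (Suc s)) w" and a: "a \<in> H0'_level h (Suc s)"
  shows "\<rho> a *\<^sub>v twisted_average w y = \<psi> (a (2 * (h - 1))) \<cdot>\<^sub>v twisted_average w y"
proof -
  let ?d = "\<lambda>x. commutator_pairing q s j x y" and ?\<sigma> = "\<lambda>x. \<rho> (U_monom s x)"
    and ?\<chi> = "\<psi> (a (2 * (h - 1)))"
  have a_U: "a \<in> U_carrier h" and a_lower: "\<forall>i\<le>h-1. a i = 0"
    using a h_ge_2 by (auto simp: H0'_level_def H0'_def U_carrier_def)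
  have w_carrier: "w \<in> carrier_vec n" and w_eigen: "\<rho> a *\<^sub>v w = ?\<chi> \<cdot>\<^sub>v w"
    using w a by (auto simp: psi_eigenvector_def)
  have \<rho>a: "\<rho> a \<in> carrier_mat n n" and \<sigma>_carrier: "?\<sigma> x \<in> carrier_mat n n" for x
    by (rule rho_carrier[OF a_U], rule rho_carrier[OF U_monom_s_in_U_carrier])
  have summand_carrier: "\<psi> (?d x) \<cdot>\<^sub>v (?\<sigma> x *\<^sub>v w) \<in> carrier_vec n" for x
    using mult_mat_vec_carrier[OF \<sigma>_carrier w_carrier] by simp
  have "U_mult h q a (U_monom s x) = U_mult h q (U_monom s x) a" for x
    using U_mult_eq_add_upper[OF q_pos a_U U_monom_s_in_U_carrier a_lower U_monom_s_lower_half]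
      U_mult_eq_add_upper[OF q_pos U_monom_s_in_U_carrier a_U U_monom_s_lower_half a_lower]
    by (simp add: add.commute)
  then have "\<rho> a *\<^sub>v (?\<sigma> x *\<^sub>v w) = ?\<sigma> x *\<^sub>v (\<rho> a *\<^sub>v w)" for x
    using rho_mult_vec[OF a_U U_monom_s_in_U_carrier w_carrier, of x]
      rho_mult_vec[OF U_monom_s_in_U_carrier a_U w_carrier, of x] by simp
  then have "\<rho> a *\<^sub>v (\<psi> (?d x) \<cdot>\<^sub>v (?\<sigma> x *\<^sub>v w)) = ?\<chi> \<cdot>\<^sub>v (\<psi> (?d x) \<cdot>\<^sub>v (?\<sigma> x *\<^sub>v w))" for x
    using mult_mat_vec[OF \<rho>a mult_mat_vec_carrier[OF \<sigma>_carrier w_carrier]]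
      mult_mat_vec[OF \<sigma>_carrier w_carrier] w_eigen
    by (simp add: smult_smult_assoc mult.commute)
  then show ?thesis
    unfolding twisted_average_def mult_mat_vec_vec_sum[OF \<rho>a summand_carrier]
    by (simp add: smult_vec_sum[OF summand_carrier])
qed

lemma H0'_level_decompose:
  assumes "a \<in> H0'_level h s"
  shows "a(s := 0) \<in> H0'_level h (Suc s)"
    and "U_mult h q (U_monom s (a s)) (a(s := 0)) = a"
proof -
  show a'_level: "a(s := 0) \<in> H0'_level h (Suc s)"
    using assms by (auto simp: H0'_level_def H0'_def U_carrier_def less_Suc_eq)
  then have "a(s := 0) \<in> H0' h"
    by (simp add: H0'_level_def)
  then have "a(s := 0) \<in> U_carrier h" and "\<forall>i\<le>h-1. (a(s := 0)) i = 0"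
    using H0'_in_U_carrier H0'_lower_half[OF _ h_ge_2] by blast+
  then have "U_mult h q (U_monom s (a s)) (a(s := 0)) = (\<lambda>k. U_monom s (a s) k + (a(s := 0)) k)"
    by (intro U_mult_eq_add_upper[OF q_pos U_monom_s_in_U_carrier _ U_monom_s_lower_half])
  also have "\<dots> = a"
    by (auto simp: U_monom_def)
  finally show "U_mult h q (U_monom s (a s)) (a(s := 0)) = a" .
qed

lemma rho_H0'_level_Suc_translated_twisted_average:
  assumes w: "psi_eigenvector (H0'_level h (Suc s)) w" and a: "a \<in> H0'_level h (Suc s)"
  shows "\<rho> a *\<^sub>v (\<rho> (U_monom j y) *\<^sub>v twisted_average w y) =
    \<psi> (a (2 * (h - 1))) \<cdot>\<^sub>v (\<rho> (U_monom j y) *\<^sub>v twisted_average w y)"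
proof -
  let ?u = "twisted_average w y" and ?\<tau> = "\<rho> (U_monom j y)"
  have a_U: "a \<in> U_carrier h"
    using a by (simp add: H0'_level_def H0'_in_U_carrier)
  have "U_mult h q (U_monom j y) a = U_mult h q a (U_monom j y)"
    using a s_plus_j by (intro U_mult_monom_commute[OF q_pos a_U, of s]) (auto simp: H0'_level_def)
  then have commute: "U_mult h q a (U_monom j y) = U_mult h q (U_monom j y) a" ..
  have "\<rho> a *\<^sub>v (?\<tau> *\<^sub>v ?u) = \<rho> (U_mult h q a (U_monom j y)) *\<^sub>v ?u"
    by (rule rho_mult_vec[OF a_U U_monom_j_in_U_carrier twisted_average_carrier, symmetric])
  also have "\<dots> = ?\<tau> *\<^sub>v (\<rho> a *\<^sub>v ?u)"
    unfolding commute by (rule rho_mult_vec[OF U_monom_j_in_U_carrier a_U twisted_average_carrier])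
  also have "\<rho> a *\<^sub>v ?u = \<psi> (a (2 * (h - 1))) \<cdot>\<^sub>v ?u"
    by (rule rho_H0'_level_twisted_average[OF w a])
  also have "?\<tau> *\<^sub>v (\<psi> (a (2 * (h - 1))) \<cdot>\<^sub>v ?u) = \<psi> (a (2 * (h - 1))) \<cdot>\<^sub>v (?\<tau> *\<^sub>v ?u)"
    by (rule mult_mat_vec[OF rho_carrier[OF U_monom_j_in_U_carrier] twisted_average_carrier])
  finally show ?thesis .
qed

lemma rho_H0'_level_translated_twisted_average:
  assumes w: "psi_eigenvector (H0'_level h (Suc s)) w" and a: "a \<in> H0'_level h s"
  shows "\<rho> a *\<^sub>v (\<rho> (U_monom j y) *\<^sub>v twisted_average w y) =
    \<psi> (a (2 * (h - 1))) \<cdot>\<^sub>v (\<rho> (U_monom j y) *\<^sub>v twisted_average w y)"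
proof -
  let ?v = "\<rho> (U_monom j y) *\<^sub>v twisted_average w y" and ?\<sigma> = "\<rho> (U_monom s (a s))"
  have v_carrier: "?v \<in> carrier_vec n"
    by (rule mult_mat_vec_carrier[OF rho_carrier[OF U_monom_j_in_U_carrier] twisted_average_carrier])
  have a'_U: "a(s := 0) \<in> U_carrier h"
    using H0'_level_decompose(1)[OF a] by (simp add: H0'_level_def H0'_in_U_carrier)
  have "s \<noteq> 2 * (h - 1)"
    using j_bounds s_plus_j by simp
  have "\<rho> a *\<^sub>v ?v = ?\<sigma> *\<^sub>v (\<rho> (a(s := 0)) *\<^sub>v ?v)"
    using rho_mult_vec[OF U_monom_s_in_U_carrier a'_U v_carrier, of "a s"] H0'_level_decompose(2)[OF a]
    by simp
  also have "\<rho> (a(s := 0)) *\<^sub>v ?v = \<psi> (a (2 * (h - 1))) \<cdot>\<^sub>v ?v"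
    using rho_H0'_level_Suc_translated_twisted_average[OF w H0'_level_decompose(1)[OF a]]
      \<open>s \<noteq> 2 * (h - 1)\<close> by simp
  also have "?\<sigma> *\<^sub>v (\<psi> (a (2 * (h - 1))) \<cdot>\<^sub>v ?v) = \<psi> (a (2 * (h - 1))) \<cdot>\<^sub>v (?\<sigma> *\<^sub>v ?v)"
    by (rule mult_mat_vec[OF rho_carrier[OF U_monom_s_in_U_carrier] v_carrier])
  also have "?\<sigma> *\<^sub>v ?v = ?v"
    using w by (intro rho_monom_s_fixes_translated_twisted_average) (simp add: psi_eigenvector_def)
  finally show ?thesis .
qed

lemma psi_eigenvector_level_step:
  assumes w: "psi_eigenvector (H0'_level h (Suc s)) w"
  shows "\<exists>v. psi_eigenvector (H0'_level h s) v"
proof -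
  obtain y where u_nonzero: "twisted_average w y \<noteq> 0\<^sub>v n"
    using twisted_average_nonzero w by (auto simp: psi_eigenvector_def)
  let ?v = "\<rho> (U_monom j y) *\<^sub>v twisted_average w y"
  have "?v \<in> carrier_vec n"
    by (rule mult_mat_vec_carrier[OF rho_carrier[OF U_monom_j_in_U_carrier] twisted_average_carrier])
  moreover have "?v \<noteq> 0\<^sub>v n"
    using rho_mult_vec_eq_zero[OF U_monom_j_in_U_carrier twisted_average_carrier] u_nonzero by blast
  ultimately have "psi_eigenvector (H0'_level h s) ?v"
    using rho_H0'_level_translated_twisted_average[OF w] by (simp add: psi_eigenvector_def)
  then show ?thesis ..
qed

end

lemma psi_eigenvector_level: "s \<le> 2 * (h - 1) \<Longrightarrow> \<exists>v. psi_eigenvector (H0'_level h s) v"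
proof (induction s rule: inc_induct)
  case base
  show ?case
    by (rule psi_eigenvector_top_level)
next
  case (step s)
  show ?case
  proof (cases "odd s \<and> h - 1 < s")
    case True
    then show ?thesis
      using psi_eigenvector_level_step[of s "2 * (h - 1) - s"] step.IH step.hyps(2) by auto
  next
    case False
    show ?thesis
      using step.IH unfolding H0'_level_Suc[OF step.hyps(2) False] .
  qed
qed

lemma restriction_contains_H0': "restriction_contains (H0' h) n \<rho> (\<lambda>a. \<psi> (a (2 * (h - 1))))"
  using psi_eigenvector_level[of 0]
  by (auto simp: restriction_contains_def psi_eigenvector_def H0'_level_0)

end

theorem lemma2p2:
  fixes p q e h n :: nat
    and \<psi> :: "'a::{finite,field} \<Rightarrow> complex"
    and \<rho> :: "(nat \<Rightarrow> 'a) \<Rightarrow> complex mat"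
  assumes "prime p" and "e \<ge> 1" and "q = p ^ e" and "h \<ge> 2"
    and "card (UNIV :: 'a set) = q ^ 2"
    and "additive_character \<psi>"
    and "\<exists>x. \<psi> (x ^ q) \<noteq> \<psi> x"
    and "irreducible_rep (U_carrier h) (U_mult h q) U_one n \<rho>"
    and "\<forall>c. \<rho> (H_top_elt h c) = \<psi> c \<cdot>\<^sub>m 1\<^sub>m n"
  shows "restriction_contains (H0' h) n \<rho> (\<lambda>a. \<psi> (a (2 * (h - 1))))"
proof -
  interpret U_rep_central_character p q e h n \<psi> \<rho>
    using assms by unfold_locales (auto simp: irreducible_rep_def)
  show ?thesis
    by (rule restriction_contains_H0')
qed

end
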